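(* Let $\mathcal{R}$ be a commutative ring with unity, $P$ a connected locally finite poset in which every maximal chain has at least three elements, and $b$ an additive biderivation of $I(P,\mathcal{R})$. Let $r_1,r_2\in\mathcal{R}$ and $x\le y$, $u\le v$ in $P$ be such that any two of $x,y,u,v$ are comparable, $x\neq v$ and $y\neq u$. Then $b(r_1e_{xy},r_2e_{uv})=0$, except possibly in the case where $x=y\neq u=v$ and one of $x,u$ is a maximal element of $P$ and the other is a minimal element of $P$.
   Context: $I(P,\mathcal{R})$ is the incidence algebra: functions $f:P\times P\to\mathcal{R}$ with $f(x,y)=0$ unless $x\le y$, with product $(fg)(x,y)=\sum_{x\le z\le y}f(x,z)g(z,y)$; $e_{xy}$ ($x\le y$) is the function equal to $1$ at $(x,y)$ and $0$ elsewhere. An additive biderivation is a map $b$ of two arguments, additive in each, with $b(\alpha\beta,\gamma)=\alpha b(\beta,\gamma)+b(\alpha,\gamma)\beta$ and $b(\alpha,\beta\gamma)=\beta b(\alpha,\gamma)+b(\alpha,\beta)\gamma$. $P$ is connected if any two elements are joined by a finite sequence of successively comparable elements. A maximal chain is a totally ordered subset to which no element of $P$ can be added keeping it totally ordered. *)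

theory Defs
  imports Main
begin

text \<open>The poset P is the carrier type 'a with its order; the ring R is the type 'r.
  Elements of the incidence algebra are represented as functions 'a => 'a => 'r.\<close>

definition locally_finite_poset :: "'a::order itself \<Rightarrow> bool" where
  "locally_finite_poset _ \<longleftrightarrow> (\<forall>x y::'a. finite {x..y})"

definition incidence_algebra :: "('a::order \<Rightarrow> 'a \<Rightarrow> 'r::comm_ring_1) set" where
  "incidence_algebra = {f. \<forall>x y. \<not> x \<le> y \<longrightarrow> f x y = 0}"

definition inc_add :: "('a::order \<Rightarrow> 'a \<Rightarrow> 'r::comm_ring_1) \<Rightarrow> ('a \<Rightarrow> 'a \<Rightarrow> 'r) \<Rightarrow> ('a \<Rightarrow> 'a \<Rightarrow> 'r)" where
  "inc_add f g = (\<lambda>x y. f x y + g x y)"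

definition inc_mult :: "('a::order \<Rightarrow> 'a \<Rightarrow> 'r::comm_ring_1) \<Rightarrow> ('a \<Rightarrow> 'a \<Rightarrow> 'r) \<Rightarrow> ('a \<Rightarrow> 'a \<Rightarrow> 'r)" where
  "inc_mult f g = (\<lambda>x y. \<Sum>z\<in>{x..y}. f x z * g z y)"

definition scaled_unit :: "'r::comm_ring_1 \<Rightarrow> 'a::order \<Rightarrow> 'a \<Rightarrow> ('a \<Rightarrow> 'a \<Rightarrow> 'r)" where
  "scaled_unit r x y = (\<lambda>a b. if a = x \<and> b = y then r else 0)"

definition additive_biderivation ::
  "(('a::order \<Rightarrow> 'a \<Rightarrow> 'r::comm_ring_1) \<Rightarrow> ('a \<Rightarrow> 'a \<Rightarrow> 'r) \<Rightarrow> ('a \<Rightarrow> 'a \<Rightarrow> 'r)) \<Rightarrow> bool" where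
  "additive_biderivation b \<longleftrightarrow>
     (\<forall>\<alpha>\<in>incidence_algebra. \<forall>\<beta>\<in>incidence_algebra. b \<alpha> \<beta> \<in> incidence_algebra) \<and>
     (\<forall>\<alpha>\<in>incidence_algebra. \<forall>\<beta>\<in>incidence_algebra. \<forall>\<gamma>\<in>incidence_algebra.
        b (inc_add \<alpha> \<beta>) \<gamma> = inc_add (b \<alpha> \<gamma>) (b \<beta> \<gamma>) \<and>
        b \<alpha> (inc_add \<beta> \<gamma>) = inc_add (b \<alpha> \<beta>) (b \<alpha> \<gamma>) \<and>
        b (inc_mult \<alpha> \<beta>) \<gamma> = inc_add (inc_mult \<alpha> (b \<beta> \<gamma>)) (inc_mult (b \<alpha> \<gamma>) \<beta>) \<and>
        b \<alpha> (inc_mult \<beta> \<gamma>) = inc_add (inc_mult \<beta> (b \<alpha> \<gamma>)) (inc_mult (b \<alpha> \<beta>) \<gamma>))"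

definition connected_poset :: "'a::order itself \<Rightarrow> bool" where
  "connected_poset _ \<longleftrightarrow> (\<forall>x y::'a. (\<lambda>a b. a \<le> b \<or> b \<le> a)\<^sup>*\<^sup>* x y)"

definition maximal_chain :: "'a::order set \<Rightarrow> bool" where
  "maximal_chain C \<longleftrightarrow> Complete_Partial_Order.chain (\<le>) C \<and>
     (\<forall>z. Complete_Partial_Order.chain (\<le>) (insert z C) \<longrightarrow> z \<in> C)"

definition has_three_elements :: "'a set \<Rightarrow> bool" where
  "has_three_elements C \<longleftrightarrow> (\<exists>a\<in>C. \<exists>b\<in>C. \<exists>c\<in>C. a \<noteq> b \<and> a \<noteq> c \<and> b \<noteq> c)"

definition is_maximal_elem :: "'a::order \<Rightarrow> bool" where
  "is_maximal_elem x \<longleftrightarrow> (\<forall>z. x \<le> z \<longrightarrow> z = x)"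

definition is_minimal_elem :: "'a::order \<Rightarrow> bool" where
  "is_minimal_elem x \<longleftrightarrow> (\<forall>z. z \<le> x \<longrightarrow> z = x)"

definition comparable :: "'a::order \<Rightarrow> 'a \<Rightarrow> bool" where
  "comparable a b \<longleftrightarrow> a \<le> b \<or> b \<le> a"

end

theory Submission
  imports Defs
begin

(*
  Expanding b(\<alpha>\<gamma>, \<beta>\<delta>) in the two possible orders gives the Bresar-type identity
  [\<alpha>, \<beta>] b(\<gamma>, \<delta>) = b(\<alpha>, \<beta>) [\<gamma>, \<delta>].  Taking \<gamma>, \<delta> (or \<alpha>, \<beta>) to be suitable matrix units,
  it shows that if A and B commute then b(A, B) has nonzero entries only at positions (p, q)
  with p minimal and q maximal.  Since x \<noteq> v and y \<noteq> u, the units e_xy and e_uv commute.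
  Writing e_xy = e_xx e_xy = e_xy e_yy (and likewise for e_uv) and using that b is a derivation
  in each argument further pins down where a nonzero entry could sit, until only the excluded
  configuration remains.  If (x, y) = (u, v), the only candidate entry is (x, y) with x minimal
  and y maximal; the chain condition then yields z strictly between them, and e_xy = e_xz e_zy
  reduces to the case of distinct pairs.
*)

lemma locally_finite_posetD:
  "locally_finite_poset TYPE('a::order) \<Longrightarrow> finite {x..y::'a}"
  by (simp add: locally_finite_poset_def)

lemma scaled_unit_in_incidence_algebra: "p \<le> q \<Longrightarrow> scaled_unit r p q \<in> incidence_algebra"
  by (auto simp: scaled_unit_def incidence_algebra_def)

lemma inc_mult_in_incidence_algebra: "inc_mult f g \<in> incidence_algebra"
  by (auto simp: inc_mult_def incidence_algebra_def)

lemma incidence_algebra_eq_0: "f \<in> incidence_algebra \<Longrightarrow> \<not> a \<le> c \<Longrightarrow> f a c = 0"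
  by (auto simp: incidence_algebra_def)

lemma inc_mult_zero_left [simp]: "inc_mult (\<lambda>_ _. 0) f = (\<lambda>_ _. 0)"
  by (simp add: inc_mult_def)

lemma inc_mult_zero_right [simp]: "inc_mult f (\<lambda>_ _. 0) = (\<lambda>_ _. 0)"
  by (simp add: inc_mult_def)

lemma inc_mult_inc_add_left: "inc_mult f (inc_add g h) = inc_add (inc_mult f g) (inc_mult f h)"
  by (auto simp: inc_mult_def inc_add_def distrib_left sum.distrib)

lemma inc_mult_inc_add_right: "inc_mult (inc_add g h) f = inc_add (inc_mult g f) (inc_mult h f)"
  by (auto simp: inc_mult_def inc_add_def distrib_right sum.distrib)

lemma inc_mult_scaled_unit_left:
  fixes K :: "'a::order \<Rightarrow> 'a \<Rightarrow> 'r::comm_ring_1"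
  assumes lf: "locally_finite_poset TYPE('a)" and "p \<le> q" and K: "K \<in> incidence_algebra"
  shows "inc_mult (scaled_unit r p q) K a c = (if a = p then r * K q c else 0)"
proof (cases "a = p \<and> q \<le> c")
  case True
  then have "inc_mult (scaled_unit r p q) K a c = (\<Sum>z\<in>{a..c}. if z = q then r * K q c else 0)"
    unfolding inc_mult_def scaled_unit_def by (intro sum.cong) auto
  with True assms show ?thesis by (simp add: locally_finite_posetD)
next
  case False
  then have "inc_mult (scaled_unit r p q) K a c = 0"
    unfolding inc_mult_def scaled_unit_def by (intro sum.neutral) auto
  with False K show ?thesis by (auto simp: incidence_algebra_eq_0)
qed

lemma inc_mult_scaled_unit_right:
  fixes K :: "'a::order \<Rightarrow> 'a \<Rightarrow> 'r::comm_ring_1"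
  assumes lf: "locally_finite_poset TYPE('a)" and "p \<le> q" and K: "K \<in> incidence_algebra"
  shows "inc_mult K (scaled_unit r p q) a c = (if c = q then K a p * r else 0)"
proof (cases "c = q \<and> a \<le> p")
  case True
  then have "inc_mult K (scaled_unit r p q) a c = (\<Sum>z\<in>{a..c}. if z = p then K a p * r else 0)"
    unfolding inc_mult_def scaled_unit_def by (intro sum.cong) auto
  with True assms show ?thesis by (simp add: locally_finite_posetD)
next
  case False
  then have "inc_mult K (scaled_unit r p q) a c = 0"
    unfolding inc_mult_def scaled_unit_def by (intro sum.neutral) auto
  with False K show ?thesis by (auto simp: incidence_algebra_eq_0)
qed

lemma inc_mult_scaled_unit:
  fixes r s :: "'r::comm_ring_1"
  assumes lf: "locally_finite_poset TYPE('a::order)" and "p \<le> q" and "q' \<le> (t::'a)"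
  shows "inc_mult (scaled_unit r p q) (scaled_unit s q' t) =
    (if q = q' then scaled_unit (r * s) p t else (\<lambda>_ _. 0))"
proof (intro ext)
  fix a c
  show "inc_mult (scaled_unit r p q) (scaled_unit s q' t) a c =
    (if q = q' then scaled_unit (r * s) p t else (\<lambda>_ _. 0)) a c"
    using assms scaled_unit_in_incidence_algebra[OF assms(3)]
    by (subst inc_mult_scaled_unit_left) (auto simp: scaled_unit_def)
qed

lemma inc_mult_assoc:
  assumes lf: "locally_finite_poset TYPE('a::order)"
    and "f \<in> incidence_algebra" and g: "g \<in> incidence_algebra"
    and "(h :: 'a \<Rightarrow> 'a \<Rightarrow> 'r::comm_ring_1) \<in> incidence_algebra"
  shows "inc_mult (inc_mult f g) h = inc_mult f (inc_mult g h)"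
proof (intro ext)
  fix a c :: 'a
  have fin: "finite {p..q::'a}" for p q using lf by (rule locally_finite_posetD)
  have "inc_mult (inc_mult f g) h a c = (\<Sum>z\<in>{a..c}. \<Sum>w\<in>{a..c}. f a w * g w z * h z c)"
    unfolding inc_mult_def sum_distrib_right
    by (intro sum.cong refl sum.mono_neutral_left)
      (use fin incidence_algebra_eq_0[OF g] in \<open>auto intro: order_trans\<close>)
  also have "\<dots> = (\<Sum>w\<in>{a..c}. \<Sum>z\<in>{a..c}. f a w * g w z * h z c)"
    by (rule sum.swap)
  also have "\<dots> = inc_mult f (inc_mult g h) a c"
    unfolding inc_mult_def sum_distrib_left
    by (intro sum.cong refl sum.mono_neutral_cong_right)
      (use fin incidence_algebra_eq_0[OF g] in \<open>auto intro: order_trans simp: mult.assoc\<close>)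
  finally show "inc_mult (inc_mult f g) h a c = inc_mult f (inc_mult g h) a c" .
qed

text \<open>Only closure and the Leibniz rule on the incidence algebra.\<close>
definition inc_derivation :: "(('a::order \<Rightarrow> 'a \<Rightarrow> 'r::comm_ring_1) \<Rightarrow> ('a \<Rightarrow> 'a \<Rightarrow> 'r)) \<Rightarrow> bool" where
  "inc_derivation D \<longleftrightarrow>
     (\<forall>\<alpha>\<in>incidence_algebra. D \<alpha> \<in> incidence_algebra) \<and>
     (\<forall>\<alpha>\<in>incidence_algebra. \<forall>\<beta>\<in>incidence_algebra.
        D (inc_mult \<alpha> \<beta>) = inc_add (inc_mult \<alpha> (D \<beta>)) (inc_mult (D \<alpha>) \<beta>))"

lemma additive_biderivation_in_incidence_algebra:
  "additive_biderivation b \<Longrightarrow> \<alpha> \<in> incidence_algebra \<Longrightarrow> \<beta> \<in> incidence_algebra \<Longrightarrow>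
    b \<alpha> \<beta> \<in> incidence_algebra"
  by (simp add: additive_biderivation_def)

lemma additive_biderivation_mult_left:
  "additive_biderivation b \<Longrightarrow> \<alpha> \<in> incidence_algebra \<Longrightarrow> \<beta> \<in> incidence_algebra \<Longrightarrow>
    \<gamma> \<in> incidence_algebra \<Longrightarrow>
    b (inc_mult \<alpha> \<beta>) \<gamma> = inc_add (inc_mult \<alpha> (b \<beta> \<gamma>)) (inc_mult (b \<alpha> \<gamma>) \<beta>)"
  by (simp add: additive_biderivation_def)

lemma additive_biderivation_mult_right:
  "additive_biderivation b \<Longrightarrow> \<alpha> \<in> incidence_algebra \<Longrightarrow> \<beta> \<in> incidence_algebra \<Longrightarrow>
    \<gamma> \<in> incidence_algebra \<Longrightarrow>
    b \<alpha> (inc_mult \<beta> \<gamma>) = inc_add (inc_mult \<beta> (b \<alpha> \<gamma>)) (inc_mult (b \<alpha> \<beta>) \<gamma>)"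
  by (simp add: additive_biderivation_def)

lemma additive_biderivation_swap:
  "additive_biderivation b \<Longrightarrow> additive_biderivation (\<lambda>\<alpha> \<beta>. b \<beta> \<alpha>)"
  by (simp add: additive_biderivation_def)

lemma additive_biderivation_derivation_left:
  "additive_biderivation b \<Longrightarrow> \<beta> \<in> incidence_algebra \<Longrightarrow> inc_derivation (\<lambda>\<alpha>. b \<alpha> \<beta>)"
  by (simp add: additive_biderivation_def inc_derivation_def)

lemma additive_biderivation_derivation_right:
  "additive_biderivation b \<Longrightarrow> \<alpha> \<in> incidence_algebra \<Longrightarrow> inc_derivation (b \<alpha>)"
  by (simp add: additive_biderivation_def inc_derivation_def)

lemma inc_derivation_scaled_unit_off_row:
  fixes D :: "('a::order \<Rightarrow> 'a \<Rightarrow> 'r::comm_ring_1) \<Rightarrow> ('a \<Rightarrow> 'a \<Rightarrow> 'r)"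
  assumes lf: "locally_finite_poset TYPE('a)" and D: "inc_derivation D" and xy: "x \<le> y"
    and "a \<noteq> x"
  shows "D (scaled_unit r x y) a c = (if c = y then D (scaled_unit 1 x x) a x * r else 0)"
proof -
  have unit_in: "scaled_unit s p q \<in> incidence_algebra" if "p \<le> q" for s :: 'r and p q :: 'a
    using that by (rule scaled_unit_in_incidence_algebra)
  have D_in: "D (scaled_unit s p q) \<in> incidence_algebra" if "p \<le> q" for s :: 'r and p q :: 'a
    using D unit_in[OF that] by (simp add: inc_derivation_def)
  have "D (scaled_unit r x y) a c = D (inc_mult (scaled_unit 1 x x) (scaled_unit r x y)) a c"
    using inc_mult_scaled_unit[OF lf order_refl xy, where r = 1 and s = r] by simp
  also have "\<dots> = inc_add (inc_mult (scaled_unit 1 x x) (D (scaled_unit r x y)))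
                          (inc_mult (D (scaled_unit 1 x x)) (scaled_unit r x y)) a c"
    using D xy by (simp add: inc_derivation_def unit_in)
  also have "\<dots> = (if c = y then D (scaled_unit 1 x x) a x * r else 0)"
    using xy \<open>a \<noteq> x\<close>
    by (simp add: inc_add_def inc_mult_scaled_unit_left[OF lf] inc_mult_scaled_unit_right[OF lf] D_in)
  finally show ?thesis .
qed

lemma inc_derivation_scaled_unit_off_column:
  fixes D :: "('a::order \<Rightarrow> 'a \<Rightarrow> 'r::comm_ring_1) \<Rightarrow> ('a \<Rightarrow> 'a \<Rightarrow> 'r)"
  assumes lf: "locally_finite_poset TYPE('a)" and D: "inc_derivation D" and xy: "x \<le> y"
    and "c \<noteq> y"
  shows "D (scaled_unit r x y) a c = (if a = x then r * D (scaled_unit 1 y y) y c else 0)"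
proof -
  have unit_in: "scaled_unit s p q \<in> incidence_algebra" if "p \<le> q" for s :: 'r and p q :: 'a
    using that by (rule scaled_unit_in_incidence_algebra)
  have D_in: "D (scaled_unit s p q) \<in> incidence_algebra" if "p \<le> q" for s :: 'r and p q :: 'a
    using D unit_in[OF that] by (simp add: inc_derivation_def)
  have "D (scaled_unit r x y) a c = D (inc_mult (scaled_unit r x y) (scaled_unit 1 y y)) a c"
    using inc_mult_scaled_unit[OF lf xy order_refl[of y], where r = r and s = 1] by simp
  also have "\<dots> = inc_add (inc_mult (scaled_unit r x y) (D (scaled_unit 1 y y)))
                          (inc_mult (D (scaled_unit r x y)) (scaled_unit 1 y y)) a c"
    using D xy by (simp add: inc_derivation_def unit_in)
  also have "\<dots> = (if a = x then r * D (scaled_unit 1 y y) y c else 0)"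
    using xy \<open>c \<noteq> y\<close>
    by (simp add: inc_add_def inc_mult_scaled_unit_left[OF lf] inc_mult_scaled_unit_right[OF lf] D_in)
  finally show ?thesis .
qed

lemma biderivation_commutator_identity:
  fixes b :: "('a::order \<Rightarrow> 'a \<Rightarrow> 'r::comm_ring_1) \<Rightarrow> ('a \<Rightarrow> 'a \<Rightarrow> 'r) \<Rightarrow> ('a \<Rightarrow> 'a \<Rightarrow> 'r)"
  assumes lf: "locally_finite_poset TYPE('a)" and bd: "additive_biderivation b"
    and I: "\<alpha> \<in> incidence_algebra" "\<beta> \<in> incidence_algebra"
           "\<gamma> \<in> incidence_algebra" "\<delta> \<in> incidence_algebra"
  shows "inc_mult (inc_mult \<alpha> \<beta>) (b \<gamma> \<delta>) a c - inc_mult (inc_mult \<beta> \<alpha>) (b \<gamma> \<delta>) a c =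
         inc_mult (b \<alpha> \<beta>) (inc_mult \<gamma> \<delta>) a c - inc_mult (b \<alpha> \<beta>) (inc_mult \<delta> \<gamma>) a c"
proof -
  note assoc = inc_mult_assoc[OF lf]
  note distrib = inc_mult_inc_add_left inc_mult_inc_add_right
  note mult_left = additive_biderivation_mult_left[OF bd]
  note mult_right = additive_biderivation_mult_right[OF bd]
  have in_I: "b \<gamma> \<delta> \<in> incidence_algebra" "b \<gamma> \<beta> \<in> incidence_algebra"
      "b \<alpha> \<delta> \<in> incidence_algebra" "b \<alpha> \<beta> \<in> incidence_algebra"
    using additive_biderivation_in_incidence_algebra[OF bd] I by auto
  \<comment> \<open>expand b(\<alpha>\<gamma>, \<beta>\<delta>) once starting with the left argument and once with the right one\<close>
  have left_first: "b (inc_mult \<alpha> \<gamma>) (inc_mult \<beta> \<delta>) =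
      inc_add (inc_add (inc_mult \<alpha> (inc_mult \<beta> (b \<gamma> \<delta>))) (inc_mult \<alpha> (inc_mult (b \<gamma> \<beta>) \<delta>)))
              (inc_add (inc_mult \<beta> (inc_mult (b \<alpha> \<delta>) \<gamma>)) (inc_mult (b \<alpha> \<beta>) (inc_mult \<delta> \<gamma>)))"
    using I in_I
    by (subst mult_left) (simp_all add: mult_right inc_mult_in_incidence_algebra distrib assoc)
  have right_first: "b (inc_mult \<alpha> \<gamma>) (inc_mult \<beta> \<delta>) =
      inc_add (inc_add (inc_mult \<beta> (inc_mult \<alpha> (b \<gamma> \<delta>))) (inc_mult \<beta> (inc_mult (b \<alpha> \<delta>) \<gamma>)))
              (inc_add (inc_mult \<alpha> (inc_mult (b \<gamma> \<beta>) \<delta>)) (inc_mult (b \<alpha> \<beta>) (inc_mult \<gamma> \<delta>)))"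
    using I in_I
    by (subst mult_right) (simp_all add: mult_left inc_mult_in_incidence_algebra distrib assoc)
  from trans[OF left_first[symmetric] right_first] show ?thesis
    using I in_I by (simp add: fun_eq_iff inc_add_def algebra_simps assoc)
qed

lemma biderivation_commuting_support:
  fixes b :: "('a::order \<Rightarrow> 'a \<Rightarrow> 'r::comm_ring_1) \<Rightarrow> ('a \<Rightarrow> 'a \<Rightarrow> 'r) \<Rightarrow> ('a \<Rightarrow> 'a \<Rightarrow> 'r)"
  assumes lf: "locally_finite_poset TYPE('a)" and bd: "additive_biderivation b"
    and I: "A \<in> incidence_algebra" "B \<in> incidence_algebra"
    and comm: "inc_mult A B = inc_mult B A" and nz: "b A B p q \<noteq> 0"
  shows "is_minimal_elem p \<and> is_maximal_elem q"
proof
  have unit_in: "scaled_unit (1::'r) s t \<in> incidence_algebra" if "s \<le> t" for s t :: 'a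
    using that by (rule scaled_unit_in_incidence_algebra)
  have bAB: "b A B \<in> incidence_algebra"
    using additive_biderivation_in_incidence_algebra[OF bd I] .
  show "is_maximal_elem q"
  proof (rule ccontr)
    assume "\<not> is_maximal_elem q"
    then obtain c where qc: "q \<le> c" "c \<noteq> q" unfolding is_maximal_elem_def by auto
    \<comment> \<open>[e_qc, e_cc] = e_qc, while [A, B] = 0\<close>
    have "inc_mult (b A B) (inc_mult (scaled_unit 1 q c) (scaled_unit 1 c c)) p c -
          inc_mult (b A B) (inc_mult (scaled_unit 1 c c) (scaled_unit 1 q c)) p c = 0"
      using biderivation_commutator_identity[OF lf bd I unit_in[OF qc(1)] unit_in[OF order_refl]]
      by (simp add: comm)
    then have "inc_mult (b A B) (scaled_unit 1 q c) p c = 0"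
      using qc by (simp add: inc_mult_scaled_unit[OF lf])
    then show False
      using nz qc by (simp add: inc_mult_scaled_unit_right[OF lf qc(1) bAB])
  qed
  show "is_minimal_elem p"
  proof (rule ccontr)
    assume "\<not> is_minimal_elem p"
    then obtain c where cp: "c \<le> p" "c \<noteq> p" unfolding is_minimal_elem_def by auto
    have "inc_mult (inc_mult (scaled_unit 1 c c) (scaled_unit 1 c p)) (b A B) c q -
          inc_mult (inc_mult (scaled_unit 1 c p) (scaled_unit 1 c c)) (b A B) c q = 0"
      using biderivation_commutator_identity[OF lf bd unit_in[OF order_refl] unit_in[OF cp(1)] I]
      by (simp add: comm)
    then have "inc_mult (scaled_unit 1 c p) (b A B) c q = 0"
      using cp by (simp add: inc_mult_scaled_unit[OF lf])
    then show False
      using nz cp by (simp add: inc_mult_scaled_unit_left[OF lf cp(1) bAB])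
  qed
qed

lemma biderivation_scaled_units_support:
  fixes b :: "('a::order \<Rightarrow> 'a \<Rightarrow> 'r::comm_ring_1) \<Rightarrow> ('a \<Rightarrow> 'a \<Rightarrow> 'r) \<Rightarrow> ('a \<Rightarrow> 'a \<Rightarrow> 'r)"
  assumes lf: "locally_finite_poset TYPE('a)" and bd: "additive_biderivation b"
    and "p \<le> q" "s \<le> t" "q \<noteq> s" "t \<noteq> p"
    and "b (scaled_unit r p q) (scaled_unit r' s t) i j \<noteq> 0"
  shows "is_minimal_elem i \<and> is_maximal_elem j"
  using assms
  by (intro biderivation_commuting_support[OF lf bd])
    (simp_all add: scaled_unit_in_incidence_algebra inc_mult_scaled_unit[OF lf])

lemma biderivation_scaled_units_same_source:
  fixes b :: "('a::order \<Rightarrow> 'a \<Rightarrow> 'r::comm_ring_1) \<Rightarrow> ('a \<Rightarrow> 'a \<Rightarrow> 'r) \<Rightarrow> ('a \<Rightarrow> 'a \<Rightarrow> 'r)"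
  assumes lf: "locally_finite_poset TYPE('a)" and bd: "additive_biderivation b"
    and xy: "x \<le> y" and xv: "x \<le> v" and "x \<noteq> y" "y \<noteq> v"
    and nz: "b (scaled_unit r x y) (scaled_unit s x v) a c \<noteq> 0"
  shows "c = y"
proof (rule ccontr)
  assume "c \<noteq> y"
  have "inc_derivation (\<lambda>\<alpha>. b \<alpha> (scaled_unit s x v))"
    using bd xv by (simp add: additive_biderivation_derivation_left scaled_unit_in_incidence_algebra)
  from inc_derivation_scaled_unit_off_column[OF lf this xy \<open>c \<noteq> y\<close>, of r a] nz
  have "b (scaled_unit 1 y y) (scaled_unit s x v) y c \<noteq> 0" by (auto split: if_splits)
  moreover have "y \<noteq> x" "v \<noteq> y" using assms by auto
  ultimately have "is_minimal_elem y"
    using biderivation_scaled_units_support[OF lf bd order_refl xv] by blast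
  then show False
    using xy \<open>x \<noteq> y\<close> by (simp add: is_minimal_elem_def)
qed

lemma biderivation_scaled_units_off_row:
  fixes b :: "('a::order \<Rightarrow> 'a \<Rightarrow> 'r::comm_ring_1) \<Rightarrow> ('a \<Rightarrow> 'a \<Rightarrow> 'r) \<Rightarrow> ('a \<Rightarrow> 'a \<Rightarrow> 'r)"
  assumes lf: "locally_finite_poset TYPE('a)" and bd: "additive_biderivation b"
    and xy: "x \<le> y" and uv: "u \<le> v" and "x \<noteq> v" "y \<noteq> u" "x \<noteq> u" "a \<noteq> x"
    and nz: "b (scaled_unit r x y) (scaled_unit s u v) a c \<noteq> 0"
  shows "x = y \<and> u = v \<and> is_maximal_elem x \<and> is_minimal_elem u"
proof -
  note support = biderivation_scaled_units_support[OF lf bd]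
  have left: "inc_derivation (\<lambda>\<alpha>. b \<alpha> (scaled_unit s u v))"
    and right: "inc_derivation (b (scaled_unit r x y))"
    using bd xy uv by (simp_all add: additive_biderivation_derivation_left
        additive_biderivation_derivation_right scaled_unit_in_incidence_algebra)
  from inc_derivation_scaled_unit_off_row[OF lf left xy \<open>a \<noteq> x\<close>, of r c] nz
  have "c = y" and "b (scaled_unit 1 x x) (scaled_unit s u v) a x \<noteq> 0"
    by (auto split: if_splits)
  moreover have "v \<noteq> x" using \<open>x \<noteq> v\<close> by simp
  ultimately have "is_minimal_elem a" "is_maximal_elem x"
    using support[OF order_refl uv \<open>x \<noteq> u\<close>] by blast+
  with xy have "y = x" by (simp add: is_maximal_elem_def)
  have "a = u"
  proof (rule ccontr)
    assume "a \<noteq> u"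
    from inc_derivation_scaled_unit_off_row[OF lf right uv this, of s c] nz
    have "c = v" by (auto split: if_splits)
    with \<open>c = y\<close> \<open>y = x\<close> \<open>x \<noteq> v\<close> show False by simp
  qed
  have "c \<noteq> v" using \<open>c = y\<close> \<open>y = x\<close> \<open>x \<noteq> v\<close> by simp
  from inc_derivation_scaled_unit_off_column[OF lf right uv this, of s a] nz
  have "b (scaled_unit r x y) (scaled_unit 1 v v) v c \<noteq> 0" by (auto split: if_splits)
  moreover have "y \<noteq> v" "v \<noteq> x" using \<open>y = x\<close> \<open>x \<noteq> v\<close> by auto
  ultimately have "is_minimal_elem v"
    using support[OF xy order_refl] by blast
  with uv have "u = v" by (simp add: is_minimal_elem_def)
  with \<open>y = x\<close> \<open>is_maximal_elem x\<close> \<open>is_minimal_elem a\<close> \<open>a = u\<close> show ?thesis by simp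
qed

lemma biderivation_scaled_units_vanish:
  fixes b :: "('a::order \<Rightarrow> 'a \<Rightarrow> 'r::comm_ring_1) \<Rightarrow> ('a \<Rightarrow> 'a \<Rightarrow> 'r) \<Rightarrow> ('a \<Rightarrow> 'a \<Rightarrow> 'r)"
  assumes lf: "locally_finite_poset TYPE('a)" and bd: "additive_biderivation b"
    and xy: "x \<le> y" and uv: "u \<le> v" and "x \<noteq> v" "y \<noteq> u" and "\<not> (x = u \<and> y = v)"
    and exc: "\<not> (x = y \<and> u = v \<and> x \<noteq> u \<and>
            ((is_maximal_elem x \<and> is_minimal_elem u) \<or> (is_minimal_elem x \<and> is_maximal_elem u)))"
  shows "b (scaled_unit r1 x y) (scaled_unit r2 u v) = (\<lambda>_ _. 0)"
proof (intro ext, rule ccontr)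
  fix a c
  assume nz: "b (scaled_unit r1 x y) (scaled_unit r2 u v) a c \<noteq> 0"
  note swapped = additive_biderivation_swap[OF bd]
  show False
  proof (cases "x = u")
    case True
    with assms have "x \<le> v" "u \<le> y" "x \<noteq> y" "y \<noteq> v" "u \<noteq> v" "v \<noteq> y" by auto
    have "c = y"
      using biderivation_scaled_units_same_source[OF lf bd xy \<open>x \<le> v\<close> \<open>x \<noteq> y\<close> \<open>y \<noteq> v\<close>] nz True
      by blast
    moreover have "c = v"
      using biderivation_scaled_units_same_source[OF lf swapped uv \<open>u \<le> y\<close> \<open>u \<noteq> v\<close> \<open>v \<noteq> y\<close>] nz True
      by blast
    ultimately show False using \<open>y \<noteq> v\<close> by simp
  next
    case False
    then consider "a \<noteq> x" | "a \<noteq> u" by blast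
    then show False
    proof cases
      case 1
      with biderivation_scaled_units_off_row[OF lf bd xy uv \<open>x \<noteq> v\<close> \<open>y \<noteq> u\<close> False 1 nz] exc False
      show False by blast
    next
      case 2
      have "u \<noteq> y" "v \<noteq> x" "u \<noteq> x" using assms False by auto
      with biderivation_scaled_units_off_row[OF lf swapped uv xy this 2] nz exc False
      show False by blast
    qed
  qed
qed

lemma biderivation_scaled_units_self_vanish:
  fixes b :: "('a::order \<Rightarrow> 'a \<Rightarrow> 'r::comm_ring_1) \<Rightarrow> ('a \<Rightarrow> 'a \<Rightarrow> 'r) \<Rightarrow> ('a \<Rightarrow> 'a \<Rightarrow> 'r)"
  assumes lf: "locally_finite_poset TYPE('a)" and bd: "additive_biderivation b" and "x < y"
    and between: "is_minimal_elem x \<Longrightarrow> is_maximal_elem y \<Longrightarrow> \<exists>z. x < z \<and> z < y"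
  shows "b (scaled_unit r1 x y) (scaled_unit r2 x y) = (\<lambda>_ _. 0)"
proof (intro ext, rule ccontr)
  fix a c
  let ?\<beta> = "scaled_unit r2 x y"
  assume nz: "b (scaled_unit r1 x y) ?\<beta> a c \<noteq> 0"
  from \<open>x < y\<close> have xy: "x \<le> y" and "y \<noteq> x" by auto
  have \<beta>_in: "?\<beta> \<in> incidence_algebra"
    using xy by (rule scaled_unit_in_incidence_algebra)
  have left: "inc_derivation (\<lambda>\<alpha>. b \<alpha> ?\<beta>)"
    using bd \<beta>_in by (rule additive_biderivation_derivation_left)
  have right: "inc_derivation (b (scaled_unit 1 p p))" for p :: 'a
    using bd scaled_unit_in_incidence_algebra[OF order_refl]
    by (rule additive_biderivation_derivation_right)
  have "is_minimal_elem a" "is_maximal_elem c"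
    using biderivation_scaled_units_support[OF lf bd xy xy \<open>y \<noteq> x\<close> \<open>y \<noteq> x\<close> nz] by auto
  \<comment> \<open>peeling the idempotents e_xx and e_yy off both arguments pins the entry to (x, y)\<close>
  have "a = x"
  proof (rule ccontr)
    assume "a \<noteq> x"
    have "b (scaled_unit 1 x x) ?\<beta> a x = 0"
      using inc_derivation_scaled_unit_off_column[OF lf right xy \<open>y \<noteq> x\<close>[symmetric]] \<open>a \<noteq> x\<close>
      by simp
    then show False
      using inc_derivation_scaled_unit_off_row[OF lf left xy \<open>a \<noteq> x\<close>] nz by (simp split: if_splits)
  qed
  have "c = y"
  proof (rule ccontr)
    assume "c \<noteq> y"
    have "b (scaled_unit 1 y y) ?\<beta> y c = 0"
      using inc_derivation_scaled_unit_off_row[OF lf right xy \<open>y \<noteq> x\<close>] \<open>c \<noteq> y\<close> by simp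
    then show False
      using inc_derivation_scaled_unit_off_column[OF lf left xy \<open>c \<noteq> y\<close>] nz by (simp split: if_splits)
  qed
  with between \<open>a = x\<close> \<open>is_minimal_elem a\<close> \<open>is_maximal_elem c\<close>
  obtain z where "x < z" "z < y" by blast
  then have xz: "x \<le> z" and zy: "z \<le> y" by auto
  have "scaled_unit r1 x y = inc_mult (scaled_unit r1 x z) (scaled_unit 1 z y)"
    using inc_mult_scaled_unit[OF lf xz zy, where r = r1 and s = 1] by simp
  then have "b (scaled_unit r1 x y) ?\<beta> =
      inc_add (inc_mult (scaled_unit r1 x z) (b (scaled_unit 1 z y) ?\<beta>))
              (inc_mult (b (scaled_unit r1 x z) ?\<beta>) (scaled_unit 1 z y))"
    using left xz zy by (simp add: inc_derivation_def scaled_unit_in_incidence_algebra)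
  also have "b (scaled_unit 1 z y) ?\<beta> = (\<lambda>_ _. 0)"
    using \<open>x < z\<close> \<open>z < y\<close>
    by (intro biderivation_scaled_units_vanish[OF lf bd zy xy]) auto
  also have "b (scaled_unit r1 x z) ?\<beta> = (\<lambda>_ _. 0)"
    using \<open>x < z\<close> \<open>z < y\<close>
    by (intro biderivation_scaled_units_vanish[OF lf bd xz xy]) auto
  finally show False
    using nz by (simp add: inc_add_def)
qed

lemma exists_between_minimal_maximal:
  fixes x y :: "'a::order"
  assumes chains: "\<forall>C::'a set. maximal_chain C \<longrightarrow> has_three_elements C"
    and "x < y" and "is_minimal_elem x" and "is_maximal_elem y"
  shows "\<exists>z. x < z \<and> z < y"
proof (rule ccontr)
  assume none: "\<not> (\<exists>z. x < z \<and> z < y)"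
  have "maximal_chain {x, y}"
    unfolding maximal_chain_def
  proof (intro conjI allI impI)
    show "Complete_Partial_Order.chain (\<le>) {x, y}"
      using \<open>x < y\<close> by (auto simp: chain_def)
  next
    fix z assume "Complete_Partial_Order.chain (\<le>) (insert z {x, y})"
    then have "z \<le> x \<or> x \<le> z" "z \<le> y \<or> y \<le> z" by (auto simp: chain_def)
    with none assms show "z \<in> {x, y}"
      unfolding is_minimal_elem_def is_maximal_elem_def by (auto simp: less_le)
  qed
  with chains have "has_three_elements {x, y}" by blast
  then show False by (auto simp: has_three_elements_def)
qed

theorem mainTheorem12:
  fixes b :: "('a::order \<Rightarrow> 'a \<Rightarrow> 'r::comm_ring_1) \<Rightarrow> ('a \<Rightarrow> 'a \<Rightarrow> 'r) \<Rightarrow> ('a \<Rightarrow> 'a \<Rightarrow> 'r)"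
    and r1 r2 :: 'r and x y u v :: 'a
  assumes "connected_poset TYPE('a)"
    and "locally_finite_poset TYPE('a)"
    and "\<forall>C::'a set. maximal_chain C \<longrightarrow> has_three_elements C"
    and "additive_biderivation b"
    and "x \<le> y" and "u \<le> v"
    and "\<forall>p\<in>{x,y,u,v}. \<forall>q\<in>{x,y,u,v}. comparable p q"
    and "x \<noteq> v" and "y \<noteq> u"
    and "\<not> (x = y \<and> u = v \<and> x \<noteq> u \<and>
            ((is_maximal_elem x \<and> is_minimal_elem u) \<or> (is_minimal_elem x \<and> is_maximal_elem u)))"
  shows "b (scaled_unit r1 x y) (scaled_unit r2 u v) = (\<lambda>_ _. 0)"
proof (cases "x = u \<and> y = v")
  case True
  with assms have "x < y" by auto
  then show ?thesis
    using True biderivation_scaled_units_self_vanish[OF assms(2,4)]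
      exists_between_minimal_maximal[OF assms(3)] by auto
next
  case False
  then show ?thesis
    by (rule biderivation_scaled_units_vanish[OF assms(2,4,5,6,8,9) _ assms(10)])
qed

end
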